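(* Let $\beta,\gamma\in(0,1)$ with $\beta\neq\gamma$, and let $\lambda=\frac{1-\beta}{1-\gamma}$. Let $\mathcal{T}$ be the graph with root $\rho$ consisting of a triangle together with the extra vertex $\rho$ attached by an edge to one vertex of the triangle. Then the effective field $R$ of $\mathcal{T}$ satisfies $R\neq1$ and $R\in(\gamma,1/\beta)$.
   Context: For a graph $G=(V,E)$ and $\lambda>0$, $\mu_{G;\beta,\gamma,\lambda}(\sigma)=\lambda^{|\sigma|}\beta^{m_0(\sigma)}\gamma^{m_1(\sigma)}/Z$ for $\sigma:V\to\{0,1\}$, $|\sigma|=\sum_v\sigma(v)$, $m_0,m_1$ the numbers of edges with both endpoints spin $0$, resp. spin $1$. For a graph with distinguished root $\rho$ and $\mu=\mu_{\mathcal{T};\beta,\gamma,\lambda}$, the effective field is $R=\frac{1}{\lambda}\frac{\mu(\sigma(\rho)=1)}{\mu(\sigma(\rho)=0)}$. *)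

theory Defs
  imports Main "HOL.Real"
begin

text \<open>A spin configuration \<sigma> : V \<rightarrow> {0,1} is encoded by the set S = {v. \<sigma> v = 1} \<subseteq> V.\<close>

definition spin_weight ::
  "'v set \<Rightarrow> 'v set set \<Rightarrow> real \<Rightarrow> real \<Rightarrow> real \<Rightarrow> 'v set \<Rightarrow> real" where
  "spin_weight V E \<beta> \<gamma> lam S =
     lam ^ card S * \<beta> ^ card {e \<in> E. e \<subseteq> V - S} * \<gamma> ^ card {e \<in> E. e \<subseteq> S}"

definition partition_fn :: "'v set \<Rightarrow> 'v set set \<Rightarrow> real \<Rightarrow> real \<Rightarrow> real \<Rightarrow> real" where
  "partition_fn V E \<beta> \<gamma> lam = (\<Sum>S\<in>Pow V. spin_weight V E \<beta> \<gamma> lam S)"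

definition gibbs_prob ::
  "'v set \<Rightarrow> 'v set set \<Rightarrow> real \<Rightarrow> real \<Rightarrow> real \<Rightarrow> ('v set \<Rightarrow> bool) \<Rightarrow> real" where
  "gibbs_prob V E \<beta> \<gamma> lam A =
     (\<Sum>S\<in>{S\<in>Pow V. A S}. spin_weight V E \<beta> \<gamma> lam S) / partition_fn V E \<beta> \<gamma> lam"

definition effective_field ::
  "'v set \<Rightarrow> 'v set set \<Rightarrow> 'v \<Rightarrow> real \<Rightarrow> real \<Rightarrow> real \<Rightarrow> real" where
  "effective_field V E \<rho> \<beta> \<gamma> lam =
     (1 / lam) * (gibbs_prob V E \<beta> \<gamma> lam (\<lambda>S. \<rho> \<in> S) / gibbs_prob V E \<beta> \<gamma> lam (\<lambda>S. \<rho> \<notin> S))"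

definition tri_V :: "nat set" where "tri_V = {0, 1, 2, 3}"
definition tri_E :: "nat set set" where "tri_E = {{0, 1}, {1, 2}, {2, 3}, {1, 3}}"

end

theory Submission
  imports Defs
begin

text \<open>Conditioning on the spin of the root's neighbour 1 splits the Gibbs weights into those of
  the triangle with vertex 1 pinned to spin 0 or 1, say \<open>Z\<^sub>0\<close> and \<open>Z\<^sub>1\<close>; the edge to the root then
  gives \<open>R = (Z\<^sub>0 + \<gamma> Z\<^sub>1) / (\<beta> Z\<^sub>0 + Z\<^sub>1)\<close>. Any such ratio of positive quantities lies strictly
  between \<open>\<gamma>\<close> and \<open>1/\<beta>\<close>, and it equals 1 iff \<open>(1-\<beta>) Z\<^sub>0 = (1-\<gamma>) Z\<^sub>1\<close>. For the chosen \<open>\<lambda>\<close> the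
  difference of the two sides is \<open>(1-\<beta>)\<^sup>3 (\<beta>-\<gamma>) \<noteq> 0\<close>.\<close>

lemma sum_Pow_insert:
  assumes "finite A" "a \<notin> A"
  shows "sum f (Pow (insert a A)) = sum f (Pow A) + sum (\<lambda>S. f (insert a S)) (Pow A)"
proof -
  have disjoint: "Pow A \<inter> insert a ` Pow A = {}" using assms by auto
  have "inj_on (insert a) (Pow A)"
    using assms unfolding inj_on_def by (metis Diff_insert_absorb PowD subsetD)
  then show ?thesis
    unfolding Pow_insert
    using sum.union_disjoint[OF _ _ disjoint, of f] sum.reindex[of "insert a" "Pow A" f] assms
    by simp
qed

lemma spin_weight_pos:
  "0 < lam \<Longrightarrow> 0 < \<beta> \<Longrightarrow> 0 < \<gamma> \<Longrightarrow> 0 < spin_weight V E \<beta> \<gamma> lam S"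
  unfolding spin_weight_def by simp

lemma partition_fn_pos:
  assumes "finite V" "0 < lam" "0 < \<beta>" "0 < \<gamma>"
  shows "0 < partition_fn V E \<beta> \<gamma> lam"
  unfolding partition_fn_def
  using assms by (intro sum_pos) (auto intro: spin_weight_pos)

lemma effective_field_eq:
  assumes "finite V" "0 < lam" "0 < \<beta>" "0 < \<gamma>"
  shows "effective_field V E \<rho> \<beta> \<gamma> lam =
    (\<Sum>S\<in>{S\<in>Pow V. \<rho> \<in> S}. spin_weight V E \<beta> \<gamma> lam S)
      / (lam * (\<Sum>S\<in>{S\<in>Pow V. \<rho> \<notin> S}. spin_weight V E \<beta> \<gamma> lam S))"
  using partition_fn_pos[OF assms, of E]
  unfolding effective_field_def gibbs_prob_def by simp

lemma card_tri_E_filter: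
  "card {e\<in>tri_E. P e} = (if P {0,1} then 1 else 0) + (if P {1,2} then 1 else 0)
     + (if P {2,3} then 1 else 0) + (if P {1,3} then 1 else 0)"
proof -
  have "card {e\<in>tri_E. P e} = (\<Sum>e\<in>tri_E. if P e then 1 else 0)"
    unfolding card_eq_sum by (rule sum.inter_filter) (simp add: tri_E_def)
  moreover have "{0::nat,1} \<notin> {{1,2},{2,3},{1,3}}" "{1::nat,2} \<notin> {{2,3},{1,3}}"
    "{2::nat,3} \<notin> {{1,3}}"
    by (auto simp: doubleton_eq_iff)
  ultimately show ?thesis unfolding tri_E_def by simp
qed

lemma sum_Pow_tri_V:
  "sum f (Pow tri_V) = f {} + f {3} + f {2} + f {2,3} + f {1} + f {1,3} + f {1,2} + f {1,2,3}
    + f {0} + f {0,3} + f {0,2} + f {0,2,3} + f {0,1} + f {0,1,3} + f {0,1,2} + f {0,1,2,3}"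
  unfolding tri_V_def by (simp add: sum_Pow_insert add.assoc)

text \<open>Total weight of the configurations of the triangle 1-2-3 with vertex 1 of spin 0, resp. 1.\<close>

definition triangle_weight0 :: "real \<Rightarrow> real \<Rightarrow> real \<Rightarrow> real" where
  "triangle_weight0 \<beta> \<gamma> lam = \<beta>^3 + 2 * lam * \<beta> + lam^2 * \<gamma>"

definition triangle_weight1 :: "real \<Rightarrow> real \<Rightarrow> real \<Rightarrow> real" where
  "triangle_weight1 \<beta> \<gamma> lam = lam * (\<beta> + 2 * lam * \<gamma> + lam^2 * \<gamma>^3)"

lemma triangle_weights_pos:
  "0 < lam \<Longrightarrow> 0 < \<beta> \<Longrightarrow> 0 < \<gamma> \<Longrightarrow> 0 < triangle_weight0 \<beta> \<gamma> lam"
  "0 < lam \<Longrightarrow> 0 < \<beta> \<Longrightarrow> 0 < \<gamma> \<Longrightarrow> 0 < triangle_weight1 \<beta> \<gamma> lam"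
  unfolding triangle_weight0_def triangle_weight1_def by (simp_all add: add_pos_pos)

lemma sum_tri_V_filter:
  "(\<Sum>S\<in>{S\<in>Pow tri_V. P S}. f S) = (\<Sum>S\<in>Pow tri_V. if P S then f S else 0)"
  by (rule sum.inter_filter) (simp add: tri_V_def)

lemma sum_spin_weight_tri_root_in:
  "(\<Sum>S\<in>{S\<in>Pow tri_V. 0 \<in> S}. spin_weight tri_V tri_E \<beta> \<gamma> lam S)
     = lam * (triangle_weight0 \<beta> \<gamma> lam + \<gamma> * triangle_weight1 \<beta> \<gamma> lam)"
  unfolding sum_tri_V_filter sum_Pow_tri_V spin_weight_def card_tri_E_filter
  by (simp add: tri_V_def) (simp add: triangle_weight0_def triangle_weight1_def
      algebra_simps power2_eq_square power3_eq_cube)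

lemma sum_spin_weight_tri_root_out:
  "(\<Sum>S\<in>{S\<in>Pow tri_V. 0 \<notin> S}. spin_weight tri_V tri_E \<beta> \<gamma> lam S)
     = \<beta> * triangle_weight0 \<beta> \<gamma> lam + triangle_weight1 \<beta> \<gamma> lam"
  unfolding sum_tri_V_filter sum_Pow_tri_V spin_weight_def card_tri_E_filter
  by (simp add: tri_V_def) (simp add: triangle_weight0_def triangle_weight1_def
      algebra_simps power2_eq_square power3_eq_cube)

lemma effective_field_tri:
  assumes "0 < lam" "0 < \<beta>" "0 < \<gamma>"
  shows "effective_field tri_V tri_E 0 \<beta> \<gamma> lam =
    (triangle_weight0 \<beta> \<gamma> lam + \<gamma> * triangle_weight1 \<beta> \<gamma> lam)
      / (\<beta> * triangle_weight0 \<beta> \<gamma> lam + triangle_weight1 \<beta> \<gamma> lam)"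
proof -
  have "finite tri_V" by (simp add: tri_V_def)
  show ?thesis
    unfolding effective_field_eq[OF \<open>finite tri_V\<close> assms]
      sum_spin_weight_tri_root_in sum_spin_weight_tri_root_out
    using assms by simp
qed

lemma triangle_weights_imbalance:
  assumes "lam * (1 - \<gamma>) = 1 - \<beta>"
  shows "(1 - \<beta>) * triangle_weight0 \<beta> \<gamma> lam - (1 - \<gamma>) * triangle_weight1 \<beta> \<gamma> lam
    = (1 - \<beta>)^3 * (\<beta> - \<gamma>)"
proof -
  have \<beta>: "\<beta> = 1 - lam * (1 - \<gamma>)" using assms by simp
  show ?thesis
    unfolding triangle_weight0_def triangle_weight1_def \<beta>
    by (simp add: algebra_simps power2_eq_square power3_eq_cube)
qed

lemma ratio_eq_1_iff:
  fixes \<beta> \<gamma> W U :: real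
  assumes "0 < \<beta> * W + U"
  shows "(W + \<gamma> * U) / (\<beta> * W + U) = 1 \<longleftrightarrow> (1 - \<beta>) * W = (1 - \<gamma>) * U"
  using assms by (auto simp: algebra_simps)

lemma ratio_bounds:
  fixes \<beta> \<gamma> W U :: real
  assumes "0 < \<beta>" "\<beta> < 1" "0 < \<gamma>" "\<gamma> < 1" "0 < W" "0 < U"
  shows "(W + \<gamma> * U) / (\<beta> * W + U) \<in> {\<gamma> <..< 1 / \<beta>}"
proof -
  have "\<gamma> * \<beta> < 1" using mult_strict_mono[of \<gamma> 1 \<beta> 1] assms by simp
  then have "(\<gamma> * \<beta>) * W < W" "(\<gamma> * \<beta>) * U < U" using assms by simp_all
  then have "\<gamma> * (\<beta> * W + U) < W + \<gamma> * U" "\<beta> * (W + \<gamma> * U) < \<beta> * W + U"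
    by (simp_all add: algebra_simps)
  moreover have "0 < \<beta> * W + U" using assms by (simp add: add_pos_pos)
  ultimately show ?thesis
    using assms by (simp add: pos_less_divide_eq divide_less_eq field_simps)
qed

theorem lemma4p1:
  fixes \<beta> \<gamma> lam :: real
  assumes "0 < \<beta>" "\<beta> < 1" "0 < \<gamma>" "\<gamma> < 1" "\<beta> \<noteq> \<gamma>"
    and "lam = (1 - \<beta>) / (1 - \<gamma>)"
  shows "effective_field tri_V tri_E 0 \<beta> \<gamma> lam \<noteq> 1
       \<and> effective_field tri_V tri_E 0 \<beta> \<gamma> lam \<in> {\<gamma> <..< 1 / \<beta>}"
proof -
  have lam: "0 < lam" "lam * (1 - \<gamma>) = 1 - \<beta>" using assms by simp_all
  define Z0 Z1 where "Z0 = triangle_weight0 \<beta> \<gamma> lam" and "Z1 = triangle_weight1 \<beta> \<gamma> lam"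
  have pos: "0 < Z0" "0 < Z1"
    unfolding Z0_def Z1_def using triangle_weights_pos lam assms by simp_all
  have R: "effective_field tri_V tri_E 0 \<beta> \<gamma> lam = (Z0 + \<gamma> * Z1) / (\<beta> * Z0 + Z1)"
    unfolding Z0_def Z1_def using effective_field_tri lam assms by simp
  have "(1 - \<beta>) * Z0 \<noteq> (1 - \<gamma>) * Z1"
    using triangle_weights_imbalance[OF lam(2)] assms unfolding Z0_def Z1_def by auto
  then have "(Z0 + \<gamma> * Z1) / (\<beta> * Z0 + Z1) \<noteq> 1"
    using ratio_eq_1_iff pos assms by (simp add: add_pos_pos)
  then show ?thesis unfolding R using ratio_bounds pos assms by simp
qed

end
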